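(* Let $n\geq3$, let $S_n=K_{1,n-1}$ be the star with centre $v$, and let $c_0$ be a finite chip configuration on $S_n$ with resulting configurations $(c_t)_{t\ge0}$. Let $\ell_M$ be a leaf whose value $c_0(\ell_M)$ is maximum among leaves and $\ell_m$ a leaf whose value $c_0(\ell_m)$ is minimum among leaves, and let $d_t=\max_{x,y\in V(S_n)\setminus\{v\}}|c_t(x)-c_t(y)|$. Then: 1. For all $t\geq0$, $d_t=c_t(\ell_M)-c_t(\ell_m)$. 2. If $c_t(\ell_m)\leq c_t(v)\leq c_t(\ell_M)$ and at least one of these inequalities is strict, then $d_{t+1}<d_t$. 3. If $c_t(v)<c_t(\ell_m)$, then there exists $r\geq t$ such that $c_r(v)\geq c_r(\ell_m)$. 4. If $c_t(v)<c_t(\ell_m)$ and $c_{t+1}(v)>c_{t+1}(\ell_M)$, then $c_t$ has property plus. 5. If $d_t=0$, then there exists $r\geq t$ such that $c_r$ has property plus.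
   Context: Diffusion process: for a vertex $u$, $\Delta_t^-(u)=|\{w\in N(u): c_t(u)>c_t(w)\}|$, $\Delta_t^+(u)=|\{w\in N(u): c_t(u)<c_t(w)\}|$, $\Delta_t(u)=\Delta_t^+(u)-\Delta_t^-(u)$, and $c_{t+1}(u)=c_t(u)+\Delta_t(u)$ for all $u$ simultaneously. A configuration $c_i$ has property plus if (1) $c_i(x)+\Delta_i(x)>c_i(y)+\Delta_i(y)$ for every edge $xy$ with $c_i(x)<c_i(y)$, and (2) $c_i(x)+\Delta_i(x)=c_i(y)+\Delta_i(y)$ for every edge $xy$ with $c_i(x)=c_i(y)$. *)

theory Defs
  imports Main
begin

definition delta_minus :: "('a \<Rightarrow> 'a set) \<Rightarrow> ('a \<Rightarrow> int) \<Rightarrow> 'a \<Rightarrow> nat" where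
  "delta_minus N c u = card {w \<in> N u. c u > c w}"

definition delta_plus :: "('a \<Rightarrow> 'a set) \<Rightarrow> ('a \<Rightarrow> int) \<Rightarrow> 'a \<Rightarrow> nat" where
  "delta_plus N c u = card {w \<in> N u. c u < c w}"

definition delta :: "('a \<Rightarrow> 'a set) \<Rightarrow> ('a \<Rightarrow> int) \<Rightarrow> 'a \<Rightarrow> int" where
  "delta N c u = int (delta_plus N c u) - int (delta_minus N c u)"

definition diffusion_step :: "('a \<Rightarrow> 'a set) \<Rightarrow> ('a \<Rightarrow> int) \<Rightarrow> ('a \<Rightarrow> int)" where
  "diffusion_step N c = (\<lambda>u. c u + delta N c u)"

definition conf :: "('a \<Rightarrow> 'a set) \<Rightarrow> ('a \<Rightarrow> int) \<Rightarrow> nat \<Rightarrow> ('a \<Rightarrow> int)" where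
  "conf N c0 t = (diffusion_step N ^^ t) c0"

definition property_plus :: "('a \<Rightarrow> 'a set) \<Rightarrow> ('a \<Rightarrow> int) \<Rightarrow> bool" where
  "property_plus N c \<longleftrightarrow>
     (\<forall>x y. y \<in> N x \<longrightarrow> c x < c y \<longrightarrow> c x + delta N c x > c y + delta N c y) \<and>
     (\<forall>x y. y \<in> N x \<longrightarrow> c x = c y \<longrightarrow> c x + delta N c x = c y + delta N c y)"

text \<open>The star S_n = K_{1,n-1} on vertex set {0..<n}, centre 0, leaves {1..<n}.\<close>
definition star :: "nat \<Rightarrow> nat \<Rightarrow> nat set" where
  "star n u = (if u = 0 then {1..<n} else if u < n then {0} else {})"

definition leaf_spread :: "nat \<Rightarrow> (nat \<Rightarrow> int) \<Rightarrow> int" where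
  "leaf_spread n c = Max {\<bar>c x - c y\<bar> | x y. x \<in> {1..<n} \<and> y \<in> {1..<n}}"

end

theory Submission
  imports Defs
begin

text \<open>Each leaf moves one chip towards the centre per step, and x \<mapsto> x + sgn (a - x) is monotone,
  so the leaves keep their order: the spread is always attained by the two initially extreme
  leaves, and it shrinks when the centre lies between them. While the centre is below every
  leaf its gap to each leaf shrinks by exactly n per step, so it catches up eventually. On the
  star, property plus says that every leaf changes sides with the centre. Once the leaves are
  all equal they stay equal, and their common gap g to the centre evolves as g \<mapsto> g - n sgn g,
  which changes sign (property plus) as soon as |g| < n.\<close>

lemma conf_0 [simp]: "conf N c0 0 = c0"
  by (simp add: conf_def)

lemma conf_Suc [simp]: "conf N c0 (Suc t) = diffusion_step N (conf N c0 t)"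
  by (simp add: conf_def)

lemma star_neighbour_iff:
  "y \<in> star n x \<longleftrightarrow> (x = 0 \<and> y \<in> {1..<n}) \<or> (y = 0 \<and> x \<in> {1..<n})"
  by (auto simp: star_def)

lemma diffusion_step_star_leaf:
  assumes "x \<in> {1..<n}"
  shows "diffusion_step (star n) c x = c x + sgn (c 0 - c x)"
proof -
  have "star n x = {0}" using assms by (simp add: star_def)
  then have "{w \<in> star n x. c x < c w} = (if c x < c 0 then {0} else {})"
    "{w \<in> star n x. c w < c x} = (if c 0 < c x then {0} else {})"
    by auto
  then show ?thesis
    by (simp add: diffusion_step_def delta_def delta_plus_def delta_minus_def sgn_if)
qed

lemma diffusion_step_star_centre:
  "diffusion_step (star n) c 0
     = c 0 + int (card {w \<in> {1..<n}. c 0 < c w}) - int (card {w \<in> {1..<n}. c w < c 0})"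
  by (simp add: diffusion_step_def delta_def delta_plus_def delta_minus_def star_def)

lemma diffusion_step_star_centre_below_leaves:
  assumes "\<forall>w\<in>{1..<n}. c 0 < c w"
  shows "diffusion_step (star n) c 0 = c 0 + int (n - 1)"
proof -
  have "{w \<in> {1..<n}. c 0 < c w} = {1..<n}" "{w \<in> {1..<n}. c w < c 0} = {}"
    using assms by (blast dest: less_asym)+
  then show ?thesis by (simp add: diffusion_step_star_centre)
qed

lemma diffusion_step_star_centre_uniform_leaves:
  assumes "\<forall>w\<in>{1..<n}. c w = a"
  shows "diffusion_step (star n) c 0 = c 0 + int (n - 1) * sgn (a - c 0)"
proof -
  have "{w \<in> {1..<n}. c 0 < c w} = (if c 0 < a then {1..<n} else {})"
    "{w \<in> {1..<n}. c w < c 0} = (if a < c 0 then {1..<n} else {})"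
    using assms by auto
  then show ?thesis by (simp add: diffusion_step_star_centre sgn_if)
qed

lemma property_plus_iff_step:
  "property_plus N c \<longleftrightarrow>
     (\<forall>x y. y \<in> N x \<longrightarrow> c x < c y \<longrightarrow> diffusion_step N c x > diffusion_step N c y) \<and>
     (\<forall>x y. y \<in> N x \<longrightarrow> c x = c y \<longrightarrow> diffusion_step N c x = diffusion_step N c y)"
  by (simp add: property_plus_def diffusion_step_def)

lemma order_reversal_iff_sgn:
  "((a::int) < b \<longrightarrow> s < u) \<and> (b < a \<longrightarrow> u < s) \<and> (b = a \<longrightarrow> s = u)
      \<longleftrightarrow> sgn (s - u) = - sgn (b - a)"
  by (auto simp: sgn_if)

lemma property_plus_star_iff:
  "property_plus (star n) c \<longleftrightarrow>
     (\<forall>w\<in>{1..<n}. sgn (diffusion_step (star n) c w - diffusion_step (star n) c 0) = - sgn (c w - c 0))"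
  (is "_ \<longleftrightarrow> (\<forall>w\<in>?L. sgn (?s w - ?s 0) = _)")
proof -
  have "property_plus (star n) c \<longleftrightarrow>
      (\<forall>w\<in>?L. (c 0 < c w \<longrightarrow> ?s w < ?s 0) \<and> (c w < c 0 \<longrightarrow> ?s 0 < ?s w) \<and> (c w = c 0 \<longrightarrow> ?s w = ?s 0))"
    unfolding property_plus_iff_step star_neighbour_iff
    by (simp add: all_conj_distrib Ball_def eq_commute [of "c 0"] eq_commute [of "?s 0"]) blast
  then show ?thesis by (simp only: order_reversal_iff_sgn)
qed

lemma add_sgn_diff_mono: "(x::int) \<le> y \<Longrightarrow> x + sgn (a - x) \<le> y + sgn (a - y)"
  by (auto simp: sgn_if)

lemma conf_star_leaf_mono:
  assumes "x \<in> {1..<n}" "y \<in> {1..<n}" "c0 x \<le> c0 y"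
  shows "conf (star n) c0 t x \<le> conf (star n) c0 t y"
  by (induction t) (use assms in \<open>simp_all add: diffusion_step_star_leaf add_sgn_diff_mono\<close>)

lemma leaf_spread_eq:
  assumes "lm \<in> {1..<n}" "lM \<in> {1..<n}" "\<forall>x\<in>{1..<n}. c lm \<le> c x \<and> c x \<le> c lM"
  shows "leaf_spread n c = c lM - c lm"
proof -
  let ?S = "{\<bar>c x - c y\<bar> | x y. x \<in> {1..<n} \<and> y \<in> {1..<n}}"
  have "?S = (\<lambda>(x, y). \<bar>c x - c y\<bar>) ` ({1..<n} \<times> {1..<n})" by fast
  then have "finite ?S" by simp
  moreover have "c lM - c lm = \<bar>c lM - c lm\<bar>" using assms by simp
  then have "c lM - c lm \<in> ?S" using assms(1,2) by blast
  moreover have "z \<le> c lM - c lm" if "z \<in> ?S" for z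
  proof -
    obtain x y where "z = \<bar>c x - c y\<bar>" "x \<in> {1..<n}" "y \<in> {1..<n}" using \<open>z \<in> ?S\<close> by blast
    moreover from this(2,3) have "c lm \<le> c x" "c x \<le> c lM" "c lm \<le> c y" "c y \<le> c lM"
      using assms(3) by blast+
    ultimately show ?thesis by linarith
  qed
  ultimately show ?thesis unfolding leaf_spread_def by (intro Max_eqI)
qed

lemma diffusion_step_star_leaf_gap_decreases:
  assumes "x \<in> {1..<n}" "y \<in> {1..<n}" "c x \<le> c 0" "c 0 \<le> c y" "c x < c 0 \<or> c 0 < c y"
  shows "diffusion_step (star n) c y - diffusion_step (star n) c x < c y - c x"
  using assms by (auto simp: diffusion_step_star_leaf sgn_if)

lemma diffusion_step_star_gap_below_leaves:
  assumes "\<forall>w\<in>{1..<n}. c 0 < c w" "x \<in> {1..<n}"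
  shows "diffusion_step (star n) c x - diffusion_step (star n) c 0 = c x - c 0 - int n"
  using assms by (auto simp: diffusion_step_star_leaf diffusion_step_star_centre_below_leaves)

lemma conf_star_centre_reaches_leaf:
  assumes "lm \<in> {1..<n}" "\<forall>t. \<forall>x\<in>{1..<n}. conf (star n) c0 t lm \<le> conf (star n) c0 t x"
  shows "\<exists>r\<ge>t. conf (star n) c0 r lm \<le> conf (star n) c0 r 0"
proof (induction "nat (conf (star n) c0 t lm - conf (star n) c0 t 0)" arbitrary: t rule: less_induct)
  case less
  let ?C = "conf (star n) c0"
  show ?case
  proof (cases "?C t 0 < ?C t lm")
    case True
    then have "\<forall>w\<in>{1..<n}. ?C t 0 < ?C t w" using assms(2) order_less_le_trans by blast
    then have "?C (Suc t) lm - ?C (Suc t) 0 = ?C t lm - ?C t 0 - int n"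
      using assms(1) by (simp add: diffusion_step_star_gap_below_leaves)
    then obtain r where "r \<ge> Suc t" "?C r lm \<le> ?C r 0"
      using less[of "Suc t"] True assms(1) by fastforce
    then show ?thesis by (intro exI[of _ r]) simp
  qed auto
qed

lemma property_plus_star_if_leaves_overtake_centre:
  assumes "\<forall>w\<in>{1..<n}. c 0 < c w"
    and "\<forall>w\<in>{1..<n}. diffusion_step (star n) c w < diffusion_step (star n) c 0"
  shows "property_plus (star n) c"
  using assms by (simp add: property_plus_star_iff)

lemma diffusion_step_star_gap_uniform_leaves:
  assumes "\<forall>w\<in>{1..<n}. c w = a" "x \<in> {1..<n}"
  shows "diffusion_step (star n) c x - diffusion_step (star n) c 0
    = (a - c 0) - int n * sgn (a - c 0)"
proof -
  have "diffusion_step (star n) c x = a - sgn (a - c 0)"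
    using assms by (simp add: diffusion_step_star_leaf sgn_minus [symmetric])
  moreover have "diffusion_step (star n) c 0 = c 0 + (int n - 1) * sgn (a - c 0)"
    using assms(2) by (simp add: diffusion_step_star_centre_uniform_leaves [OF assms(1)])
  ultimately show ?thesis by (simp add: algebra_simps)
qed

lemma property_plus_star_uniform_leaves:
  assumes "\<forall>w\<in>{1..<n}. c w = a" "\<bar>a - c 0\<bar> < int n"
  shows "property_plus (star n) c"
  unfolding property_plus_star_iff
proof
  fix x assume x: "x \<in> {1..<n}"
  have "sgn ((a - c 0) - int n * sgn (a - c 0)) = - sgn (a - c 0)"
    using assms(2) by (auto simp: sgn_if)
  then show "sgn (diffusion_step (star n) c x - diffusion_step (star n) c 0) = - sgn (c x - c 0)"
    using assms(1) x by (simp add: diffusion_step_star_gap_uniform_leaves [OF assms(1) x])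
qed

lemma conf_star_uniform_leaves_eventually_property_plus:
  assumes "l \<in> {1..<n}" "\<forall>w\<in>{1..<n}. conf (star n) c0 t w = conf (star n) c0 t l"
  shows "\<exists>r\<ge>t. property_plus (star n) (conf (star n) c0 r)"
  using assms(2)
proof (induction "nat \<bar>conf (star n) c0 t l - conf (star n) c0 t 0\<bar>" arbitrary: t rule: less_induct)
  case less
  let ?C = "conf (star n) c0"
  let ?g = "?C t l - ?C t 0"
  show ?case
  proof (cases "\<bar>?g\<bar> < int n")
    case True
    then show ?thesis using property_plus_star_uniform_leaves [OF less.prems] by blast
  next
    case False
    have uniform: "\<forall>w\<in>{1..<n}. ?C (Suc t) w = ?C (Suc t) l"
    proof
      fix w assume w: "w \<in> {1..<n}"
      then have "?C t w = ?C t l" using less.prems by blast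
      then show "?C (Suc t) w = ?C (Suc t) l" using w assms(1) by (simp add: diffusion_step_star_leaf)
    qed
    have "?C (Suc t) l - ?C (Suc t) 0 = ?g - int n * sgn ?g"
      using diffusion_step_star_gap_uniform_leaves [OF less.prems assms(1)] by simp
    then have "\<bar>?C (Suc t) l - ?C (Suc t) 0\<bar> < \<bar>?g\<bar>"
      using False assms(1) by (auto simp: sgn_if)
    then obtain r where "r \<ge> Suc t" "property_plus (star n) (?C r)"
      using less.hyps [of "Suc t"] uniform by fastforce
    then show ?thesis by (intro exI [of _ r]) simp
  qed
qed

theorem lemma18:
  fixes n :: nat and c0 :: "nat \<Rightarrow> int" and lM lm :: nat
  assumes "n \<ge> 3"
    and "lM \<in> {1..<n}" and "lm \<in> {1..<n}"
    and "\<forall>x\<in>{1..<n}. c0 x \<le> c0 lM"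
    and "\<forall>x\<in>{1..<n}. c0 lm \<le> c0 x"
  shows "(\<forall>t. leaf_spread n (conf (star n) c0 t) = conf (star n) c0 t lM - conf (star n) c0 t lm)
    \<and> (\<forall>t. conf (star n) c0 t lm \<le> conf (star n) c0 t 0 \<and> conf (star n) c0 t 0 \<le> conf (star n) c0 t lM
           \<and> (conf (star n) c0 t lm < conf (star n) c0 t 0 \<or> conf (star n) c0 t 0 < conf (star n) c0 t lM)
           \<longrightarrow> leaf_spread n (conf (star n) c0 (Suc t)) < leaf_spread n (conf (star n) c0 t))
    \<and> (\<forall>t. conf (star n) c0 t 0 < conf (star n) c0 t lm
           \<longrightarrow> (\<exists>r\<ge>t. conf (star n) c0 r 0 \<ge> conf (star n) c0 r lm))
    \<and> (\<forall>t. conf (star n) c0 t 0 < conf (star n) c0 t lm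
           \<and> conf (star n) c0 (Suc t) 0 > conf (star n) c0 (Suc t) lM
           \<longrightarrow> property_plus (star n) (conf (star n) c0 t))
    \<and> (\<forall>t. leaf_spread n (conf (star n) c0 t) = 0
           \<longrightarrow> (\<exists>r\<ge>t. property_plus (star n) (conf (star n) c0 r)))"
proof -
  let ?C = "conf (star n) c0"
  have extremes: "\<forall>x\<in>{1..<n}. ?C t lm \<le> ?C t x \<and> ?C t x \<le> ?C t lM" for t
    using assms(2-5) by (simp add: conf_star_leaf_mono)
  have spread: "leaf_spread n (?C t) = ?C t lM - ?C t lm" for t
    using leaf_spread_eq [OF assms(3,2) extremes] .
  have "leaf_spread n (?C (Suc t)) < leaf_spread n (?C t)"
    if "?C t lm \<le> ?C t 0" "?C t 0 \<le> ?C t lM" "?C t lm < ?C t 0 \<or> ?C t 0 < ?C t lM" for t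
    using diffusion_step_star_leaf_gap_decreases [OF assms(3,2) that] unfolding spread by simp
  moreover have "\<exists>r\<ge>t. ?C r lm \<le> ?C r 0" for t
    by (rule conf_star_centre_reaches_leaf [OF assms(3)]) (simp add: extremes)
  moreover have "property_plus (star n) (?C t)" if "?C t 0 < ?C t lm" "?C (Suc t) lM < ?C (Suc t) 0" for t
  proof (rule property_plus_star_if_leaves_overtake_centre; intro ballI)
    fix w assume "w \<in> {1..<n}"
    then have "?C t lm \<le> ?C t w" "?C (Suc t) w \<le> ?C (Suc t) lM"
      using extremes by blast+
    then show "?C t 0 < ?C t w" "diffusion_step (star n) (?C t) w < diffusion_step (star n) (?C t) 0"
      using that by simp_all
  qed
  moreover have "\<exists>r\<ge>t. property_plus (star n) (?C r)" if "leaf_spread n (?C t) = 0" for t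
  proof -
    have "?C t lM = ?C t lm" using that unfolding spread by simp
    then have "\<forall>w\<in>{1..<n}. ?C t w = ?C t lm" using extremes [of t] by fastforce
    then show ?thesis
      by (rule conf_star_uniform_leaves_eventually_property_plus [OF assms(3)])
  qed
  ultimately show ?thesis using spread by blast
qed

end
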